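(* Let $(\mathbf{T},V)$ be a branching random walk with reproduction law $\mathcal{L}$ satisfying (A1) and (A3). There exist $a>0$ and $\rho>1$ such that almost surely, for all $n\ge1$ large enough, \[\#\{|u|=n:\ \forall j\le n,\ V(u_j)\ge-na\}\ge\rho^n.\]
   Context: $\mathcal{L}$ is the law of a point process $L$ on $\mathbb{R}$. The branching random walk $(\mathbf{T},V)$ starts with one individual at $0$; each individual dies giving birth to children positioned according to an independent copy of $L$ shifted by its position. $|u|$ is the generation of $u$, $V(u)$ its position, $u_j$ its ancestor at generation $j$. (A1) $\mathbb{P}(\#L=0)=0$ and $\mathbb{E}[\#L]>1$. (A3) $\mathbb{E}[\sum_{\ell\in L}e^\ell(\log\sum_{\ell'\in L}e^{\ell'-\ell})^2]<\infty$. *)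

theory Defs
  imports "HOL-Probability.Probability"
begin

text \<open>A realization of the point process L: its number of points (possibly infinite)
and an enumeration of its points (only indices i with i < count matter).\<close>
type_synonym pp = "enat \<times> (nat \<Rightarrow> real)"

definition pp_space :: "pp measure" where
  "pp_space = count_space UNIV \<Otimes>\<^sub>M (\<Pi>\<^sub>M i\<in>UNIV. (borel :: real measure))"

definition A3_integrand :: "pp \<Rightarrow> ennreal" where
  "A3_integrand z =
     (\<Sum>i. if enat i < fst z then
        (let W = (\<Sum>j. if enat j < fst z then ennreal (exp (snd z j - snd z i)) else 0)
         in ennreal (exp (snd z i)) *
            (if W = \<infinity> then \<infinity> else ennreal ((ln (enn2real W))\<^sup>2)))
      else 0)"

text \<open>Ulam-Harris tree: u is an individual iff each step picks an existing child.\<close>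
definition in_tree :: "(nat list \<Rightarrow> enat) \<Rightarrow> nat list \<Rightarrow> bool" where
  "in_tree N u \<longleftrightarrow> (\<forall>k<length u. enat (u ! k) < N (take k u))"

definition pos :: "(nat list \<Rightarrow> nat \<Rightarrow> real) \<Rightarrow> nat list \<Rightarrow> real" where
  "pos X u = (\<Sum>k<length u. X (take k u) (u ! k))"

definition good_set :: "(nat list \<Rightarrow> enat) \<Rightarrow> (nat list \<Rightarrow> nat \<Rightarrow> real) \<Rightarrow> real \<Rightarrow> nat \<Rightarrow> nat list set" where
  "good_set N X a n = {u. in_tree N u \<and> length u = n \<and>
                          (\<forall>j\<le>n. pos X (take j u) \<ge> - (real n * a))}"

end

theory Submission
  imports Defs
begin

text \<open>
  Keeping only the first \<open>K\<close> children of every individual, and among them only those whose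
  displacement is at least \<open>-a\<close>, turns the branching random walk into a Galton--Watson tree
  with offspring bounded by \<open>K\<close>; by (A1) and monotone convergence its mean \<open>\<mu>\<close> exceeds \<open>1\<close>
  for suitable \<open>K\<close> and \<open>a\<close>. Along a line of descent in this truncated tree the position
  drops by at most \<open>a\<close> per generation, so it suffices to find, almost surely, a vertex \<open>r\<close>
  below which the truncated population \<open>Z\<^sub>n\<close> grows like \<open>\<mu>\<^sup>n\<close>.

  Independence of the reproduction laws gives the moment recursions
  \<open>E Z\<^sub>n\<^sup>2 \<le> C \<mu>\<^sup>2\<^sup>n\<close> and \<open>E D\<^sub>n\<^sup>2 \<le> K\<^sup>2 \<mu>\<^sup>n\<close> for \<open>D\<^sub>n = Z\<^sub>n\<^sub>+\<^sub>1 - \<mu> Z\<^sub>n\<close>.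
  By Paley--Zygmund, \<open>Z\<^sub>N \<ge> \<mu>\<^sup>N / 2\<close> with probability at least \<open>1 / (4 C)\<close>; by Chebyshev and
  a union bound, \<open>|D\<^sub>n| < \<rho>\<^sup>3\<^sup>n\<close> for all \<open>n \<ge> N\<close> (where \<open>\<rho>\<^sup>4 = \<mu>\<close>) fails with probability
  at most \<open>1 / (8 C)\<close> once \<open>N\<close> is large; on the intersection \<open>Z\<^sub>n \<ge> \<mu>\<^sup>n / 4\<close> for all \<open>n \<ge> N\<close>.
  The subtrees rooted at the vertices \<open>0\<^sup>k1\<close> hanging off the leftmost path are independent, so
  almost surely one of them has this property (and \<open>0\<^sup>k\<close> has a second child), while (A1)
  guarantees that the leftmost path exists.
\<close>


lemma paley_zygmund_pointwise:
  fixes x m C :: real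
  assumes "0 < C" "0 < m"
  shows "x \<le> m / 2 + C * m * of_bool (m / 2 \<le> x) + x\<^sup>2 / (4 * C * m)"
proof (cases "m / 2 \<le> x")
  case True
  have pos: "0 < 4 * C * m"
    using assms by simp
  have "x = 4 * C * m * x / (4 * C * m)"
    using pos by (simp only: nonzero_mult_div_cancel_left less_irrefl)
  also have "\<dots> \<le> (x\<^sup>2 + C * m * (4 * C * m)) / (4 * C * m)"
    using zero_le_power2[of "x - 2 * C * m"] pos
    by (intro divide_right_mono) (auto simp: power2_eq_square algebra_simps)
  also have "\<dots> = C * m + x\<^sup>2 / (4 * C * m)"
    using pos by (simp add: add_divide_distrib)
  finally show ?thesis
    using True assms by simp
next
  case False
  have "0 \<le> x\<^sup>2 / (4 * C * m)"
    using assms by simp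
  then show ?thesis
    using False by simp
qed

lemma (in prob_space) paley_zygmund_half:
  fixes X :: "'a \<Rightarrow> real"
  assumes [measurable]: "X \<in> borel_measurable M" and bounded: "\<And>x. x \<in> space M \<Longrightarrow> \<bar>X x\<bar> \<le> B"
    and mean: "expectation X = m" "0 < m"
    and second_moment: "expectation (\<lambda>x. (X x)\<^sup>2) \<le> C * m\<^sup>2" "0 < C"
  shows "1 / (4 * C) \<le> prob {x \<in> space M. m / 2 \<le> X x}"
proof -
  define A where "A = {x \<in> space M. m / 2 \<le> X x}"
  have A [measurable]: "A \<in> events"
    unfolding A_def by measurable
  have "(X x)\<^sup>2 \<le> B\<^sup>2" if "x \<in> space M" for x
    using bounded[OF that] abs_le_square_iff[of "X x" B] by auto
  then have integrable_sq: "integrable M (\<lambda>x. (X x)\<^sup>2)"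
    by (intro integrable_const_bound[where B="B\<^sup>2"]) auto
  have integrable: "integrable M X"
    using bounded by (intro integrable_const_bound[where B=B]) auto
  have pos: "0 < 4 * C * m"
    using mean second_moment by simp
  have pointwise: "X x \<le> m / 2 + C * m * indicator A x + (X x)\<^sup>2 / (4 * C * m)"
    if "x \<in> space M" for x
    using paley_zygmund_pointwise[OF second_moment(2) mean(2), of "X x"] that
    by (simp add: A_def indicator_def)
  have "m \<le> expectation (\<lambda>x. m / 2 + C * m * indicator A x + (X x)\<^sup>2 / (4 * C * m))"
  proof -
    have "expectation X \<le> expectation (\<lambda>x. m / 2 + C * m * indicator A x + (X x)\<^sup>2 / (4 * C * m))"
      using integrable integrable_sq pointwise
      by (intro integral_mono Bochner_Integration.integrable_add integrable_mult_right
          integrable_divide integrable_real_indicator) (auto simp: emeasure_eq_measure)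
    then show ?thesis using mean(1) by simp
  qed
  also have "\<dots> = m / 2 + C * m * prob A + expectation (\<lambda>x. (X x)\<^sup>2) / (4 * C * m)"
  proof -
    have int_ind: "integrable M (\<lambda>x. m / 2 + C * m * indicator A x)"
      by (auto simp: emeasure_eq_measure)
    show ?thesis
      using integrable_sq prob_space
      by (simp add: Bochner_Integration.integral_add[OF int_ind] emeasure_eq_measure)
  qed
  also have "\<dots> \<le> m / 2 + C * m * prob A + C * m\<^sup>2 / (4 * C * m)"
    using second_moment(1) pos by (intro add_left_mono divide_right_mono) auto
  also have "C * m\<^sup>2 / (4 * C * m) = m / 4"
    using mean second_moment by (simp add: power2_eq_square)
  finally have "m * (1 / (4 * C)) \<le> m * prob A"
    using second_moment(2) by (simp add: field_simps)
  then show ?thesis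
    using mean(2) unfolding A_def by (rule mult_left_le_imp_le)
qed

lemma (in prob_space) prob_INT_indep_events_eq_0:
  fixes A :: "nat \<Rightarrow> 'a set"
  assumes indep: "indep_events A UNIV" and le: "\<And>k. prob (A k) \<le> q" and "q < 1"
  shows "prob (\<Inter>k. A k) = 0"
proof -
  have A [measurable]: "A k \<in> events" for k
    using indep by (auto simp: indep_events_def)
  have "0 \<le> q"
    using le[of 0] measure_nonneg[of M "A 0"] by linarith
  have "prob (\<Inter>k. A k) \<le> q ^ Suc n" for n
  proof -
    have "prob (\<Inter>k. A k) \<le> prob (\<Inter>k\<in>{..n}. A k)"
      by (rule finite_measure_mono) auto
    also have "\<dots> = (\<Prod>k\<in>{..n}. prob (A k))"
      using indep by (auto simp: indep_events_def)
    also have "\<dots> \<le> (\<Prod>k\<in>{..n}. q)"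
      by (intro prod_mono) (simp add: le)
    finally show ?thesis by simp
  qed
  moreover have "(\<lambda>n. q ^ Suc n) \<longlonglongrightarrow> 0"
    using \<open>0 \<le> q\<close> \<open>q < 1\<close> by (intro LIMSEQ_Suc LIMSEQ_power_zero) simp
  ultimately have "prob (\<Inter>k. A k) \<le> 0"
    by (intro tendsto_lowerbound[of _ 0 sequentially]) auto
  then show ?thesis
    using measure_nonneg[of M] by (simp add: order_antisym)
qed

lemma geometric_tail_sum_le:
  fixes q :: real
  assumes "0 \<le> q" "q < 1"
  shows "(\<Sum>j<k. q ^ (N + j)) \<le> q ^ N / (1 - q)"
proof -
  have "(\<lambda>j. q ^ (N + j)) sums (q ^ N / (1 - q))"
    using sums_mult[OF geometric_sums[of q], of "q ^ N"] assms by (simp add: power_add divide_inverse)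
  then show ?thesis
    using assms by (metis sum_le_suminf sums_summable sums_unique zero_le_power UNIV_I finite_lessThan)
qed

lemma normalized_recursion_lower_bound:
  fixes z d :: "nat \<Rightarrow> real"
  assumes "0 < m" and rec: "\<And>n. z (Suc n) = m * z n + d n"
  shows "z N / m ^ N - (\<Sum>j<k. \<bar>d (N + j)\<bar> / m ^ Suc (N + j)) \<le> z (N + k) / m ^ (N + k)"
proof (induction k)
  case (Suc k)
  have "z (N + Suc k) / m ^ (N + Suc k) = z (N + k) / m ^ (N + k) + d (N + k) / m ^ Suc (N + k)"
    using assms by (simp add: rec add_divide_distrib)
  moreover have "- (\<bar>d (N + k)\<bar> / m ^ Suc (N + k)) \<le> d (N + k) / m ^ Suc (N + k)"
    using divide_right_mono[OF abs_ge_minus_self[of "d (N + k)"], of "m ^ Suc (N + k)"] assms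
    by simp
  ultimately show ?case
    using Suc by simp
qed simp

section \<open>The truncated tree\<close>

text \<open>The recursions below keep sums of the form \<open>\<Sum>i. of_bool P\<^sub>i * f i\<close>; the library's simp rule
  turning them into sums over filtered index sets would hide them from the measurability prover.\<close>
declare sum_of_bool_mult_eq [simp del]

definition kept :: "real \<Rightarrow> pp \<Rightarrow> nat \<Rightarrow> bool" where
  "kept a z i \<longleftrightarrow> enat i < fst z \<and> - a \<le> snd z i"

primrec trunc_gen :: "nat \<Rightarrow> real \<Rightarrow> (nat list \<Rightarrow> pp) \<Rightarrow> nat list \<Rightarrow> nat \<Rightarrow> real" where
  "trunc_gen K a \<zeta> v 0 = 1"
| "trunc_gen K a \<zeta> v (Suc n) = (\<Sum>i<K. of_bool (kept a (\<zeta> v) i) * trunc_gen K a \<zeta> (v @ [i]) n)"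

definition trunc_desc :: "nat \<Rightarrow> real \<Rightarrow> (nat list \<Rightarrow> pp) \<Rightarrow> nat list \<Rightarrow> nat \<Rightarrow> nat list set" where
  "trunc_desc K a \<zeta> v n =
     {w. length w = n \<and> (\<forall>j<n. w ! j < K \<and> kept a (\<zeta> (v @ take j w)) (w ! j))}"

lemma finite_trunc_desc: "finite (trunc_desc K a \<zeta> v n)"
proof (rule finite_subset)
  show "trunc_desc K a \<zeta> v n \<subseteq> {w. set w \<subseteq> {..<K} \<and> length w = n}"
    by (auto simp: trunc_desc_def in_set_conv_nth)
qed (simp add: finite_lists_length_eq)

lemma trunc_desc_Suc:
  "trunc_desc K a \<zeta> v (Suc n) =
     (\<Union>i\<in>{i. i < K \<and> kept a (\<zeta> v) i}. (#) i ` trunc_desc K a \<zeta> (v @ [i]) n)"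
proof (intro equalityI subsetI)
  fix u assume u: "u \<in> trunc_desc K a \<zeta> v (Suc n)"
  then obtain i w where iw: "u = i # w" by (cases u) (auto simp: trunc_desc_def)
  have "i < K \<and> kept a (\<zeta> v) i"
    using u iw by (auto simp: trunc_desc_def dest!: spec[of _ 0])
  moreover have "w \<in> trunc_desc K a \<zeta> (v @ [i]) n"
    using u iw by (auto simp: trunc_desc_def dest!: spec[of _ "Suc _"])
  ultimately show "u \<in> (\<Union>i\<in>{i. i < K \<and> kept a (\<zeta> v) i}. (#) i ` trunc_desc K a \<zeta> (v @ [i]) n)"
    using iw by blast
next
  fix u assume "u \<in> (\<Union>i\<in>{i. i < K \<and> kept a (\<zeta> v) i}. (#) i ` trunc_desc K a \<zeta> (v @ [i]) n)"
  then obtain i w where "u = i # w" "i < K" "kept a (\<zeta> v) i" "w \<in> trunc_desc K a \<zeta> (v @ [i]) n"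
    by auto
  then show "u \<in> trunc_desc K a \<zeta> v (Suc n)"
    by (auto simp: trunc_desc_def less_Suc_eq_0_disj)
qed

lemma trunc_gen_eq_card: "trunc_gen K a \<zeta> v n = real (card (trunc_desc K a \<zeta> v n))"
proof (induction n arbitrary: v)
  case 0
  have "trunc_desc K a \<zeta> v 0 = {[]}" by (auto simp: trunc_desc_def)
  then show ?case by simp
next
  case (Suc n)
  let ?I = "{i. i < K \<and> kept a (\<zeta> v) i}"
  have "card (trunc_desc K a \<zeta> v (Suc n)) = (\<Sum>i\<in>?I. card ((#) i ` trunc_desc K a \<zeta> (v @ [i]) n))"
    unfolding trunc_desc_Suc by (rule card_UN_disjoint) (auto simp: finite_trunc_desc)
  also have "\<dots> = (\<Sum>i\<in>?I. card (trunc_desc K a \<zeta> (v @ [i]) n))"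
    by (intro sum.cong refl card_image) auto
  finally have "real (card (trunc_desc K a \<zeta> v (Suc n))) = (\<Sum>i\<in>?I. trunc_gen K a \<zeta> (v @ [i]) n)"
    by (simp add: Suc)
  also have "\<dots> = trunc_gen K a \<zeta> v (Suc n)"
    by (simp add: sum.inter_restrict Collect_conj_eq lessThan_def[symmetric] sum_of_bool_mult_eq)
  finally show ?case by simp
qed

lemma trunc_gen_nonneg: "0 \<le> trunc_gen K a \<zeta> v n"
  by (simp add: trunc_gen_eq_card)

lemma trunc_gen_le: "trunc_gen K a \<zeta> v n \<le> real K ^ n"
proof (induction n arbitrary: v)
  case (Suc n)
  have "trunc_gen K a \<zeta> v (Suc n) \<le> (\<Sum>i<K. 1 * real K ^ n)"
    unfolding trunc_gen.simps by (intro sum_mono mult_mono) (auto simp: Suc trunc_gen_nonneg)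
  then show ?case by simp
qed simp

lemma abs_trunc_gen_le: "\<bar>trunc_gen K a \<zeta> v n\<bar> \<le> real K ^ n"
  using trunc_gen_le trunc_gen_nonneg by (metis abs_of_nonneg)

definition trunc_defect :: "nat \<Rightarrow> real \<Rightarrow> real \<Rightarrow> (nat list \<Rightarrow> pp) \<Rightarrow> nat list \<Rightarrow> nat \<Rightarrow> real" where
  "trunc_defect K a m \<zeta> v n = trunc_gen K a \<zeta> v (Suc n) - m * trunc_gen K a \<zeta> v n"

lemma trunc_defect_Suc:
  "trunc_defect K a m \<zeta> v (Suc n) =
     (\<Sum>i<K. of_bool (kept a (\<zeta> v) i) * trunc_defect K a m \<zeta> (v @ [i]) n)"
  unfolding trunc_defect_def trunc_gen.simps(2)[of K a \<zeta> v "Suc n"] trunc_gen.simps(2)[of K a \<zeta> v n]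
  by (simp only: right_diff_distrib sum_subtractf sum_distrib_left mult.left_commute)

lemma ex_kept_count_ge:
  assumes "enat k \<le> fst z"
  shows "\<exists>n. real k \<le> (\<Sum>i<n. of_bool (kept (real n) z i))"
proof -
  define n where "n = k + nat \<lceil>\<Sum>i<k. \<bar>snd z i\<bar>\<rceil>"
  have "kept (real n) z i" if "i < k" for i
  proof -
    have "\<bar>snd z i\<bar> \<le> (\<Sum>i<k. \<bar>snd z i\<bar>)"
      using that by (intro member_le_sum) auto
    also have "\<dots> \<le> real n"
      unfolding n_def by linarith
    moreover have "enat i < fst z"
      using that assms by (meson enat_ord_simps(2) order_less_le_trans)
    ultimately show ?thesis
      by (simp add: kept_def)
  qed
  then have "real k = (\<Sum>i<k. of_bool (kept (real n) z i))"
    by simp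
  also have "\<dots> \<le> (\<Sum>i<n. of_bool (kept (real n) z i))"
    by (rule sum_mono2) (auto simp: n_def)
  finally show ?thesis ..
qed

lemma kept_count_mono:
  assumes "m \<le> n"
  shows "(\<Sum>i<m. of_bool (kept (real m) z i) :: real) \<le> (\<Sum>i<n. of_bool (kept (real n) z i))"
proof -
  have "(\<Sum>i<m. of_bool (kept (real m) z i) :: real) \<le> (\<Sum>i<m. of_bool (kept (real n) z i))"
    using assms by (intro sum_mono) (auto simp: kept_def)
  also have "\<dots> \<le> (\<Sum>i<n. of_bool (kept (real n) z i))"
    using assms by (intro sum_mono2) auto
  finally show ?thesis .
qed

lemma count_le_SUP_kept_count:
  "ennreal_of_enat (fst z) \<le> (SUP n. ennreal (\<Sum>i<n. of_bool (kept (real n) z i)))"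
proof -
  have le_SUP: "of_nat k \<le> (SUP n. ennreal (\<Sum>i<n. of_bool (kept (real n) z i)))"
    if k: "enat k \<le> fst z" for k
  proof -
    obtain n where "real k \<le> (\<Sum>i<n. of_bool (kept (real n) z i))"
      using ex_kept_count_ge[OF k] by blast
    then show ?thesis
      by (intro SUP_upper2[of n]) (auto simp: ennreal_of_nat_eq_real_of_nat intro: ennreal_leI)
  qed
  then show ?thesis
  proof (cases "fst z")
    case infinity
    then show ?thesis
      using le_SUP by (simp add: ennreal_SUP_of_nat_eq_top[symmetric] SUP_least)
  qed simp
qed

section \<open>Positions along a path\<close>

abbreviation spine :: "nat \<Rightarrow> nat list" where
  "spine k \<equiv> replicate k 0"

abbreviation branch :: "nat \<Rightarrow> nat list" where
  "branch k \<equiv> replicate k 0 @ [1]"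

lemma in_tree_append:
  "in_tree N (r @ w) \<longleftrightarrow> in_tree N r \<and> (\<forall>j<length w. enat (w ! j) < N (r @ take j w))"
proof -
  have "(\<forall>k<length (r @ w). P k) \<longleftrightarrow> (\<forall>k<length r. P k) \<and> (\<forall>j<length w. P (length r + j))" for P
    by (auto, metis add_diff_inverse_nat nat_add_left_cancel_less)
  then show ?thesis
    unfolding in_tree_def by (simp add: nth_append take_append)
qed

lemma in_tree_branch:
  assumes "\<And>j. N (spine j) \<noteq> 0" and "1 < N (spine k)"
  shows "in_tree N (branch k)"
  unfolding in_tree_def
proof (intro allI impI)
  fix j assume "j < length (branch k)"
  then consider "j < k" | "j = k" by fastforce
  then show "enat (branch k ! j) < N (take j (branch k))"
  proof cases
    case 1
    then show ?thesis using assms(1)[of j] by (simp add: nth_append take_append zero_enat_def[symmetric])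
  next
    case 2
    then show ?thesis using assms(2) by (simp add: nth_append one_enat_def)
  qed
qed

lemma pos_snoc: "pos X (u @ [x]) = pos X u + X u x"
proof -
  have "(\<Sum>k<length u. X (take k (u @ [x])) ((u @ [x]) ! k)) = pos X u"
    unfolding pos_def by (intro sum.cong) (auto simp: nth_append)
  then show ?thesis
    by (simp add: pos_def)
qed

lemma pos_append_ge:
  assumes "\<And>j. j < length w \<Longrightarrow> - a \<le> X (v @ take j w) (w ! j)"
  shows "pos X v - real (length w) * a \<le> pos X (v @ w)"
  using assms
proof (induction w rule: rev_induct)
  case (snoc x w)
  have "pos X v - real (length w) * a \<le> pos X (v @ w)"
  proof (rule snoc.IH)
    fix j assume "j < length w"
    then show "- a \<le> X (v @ take j w) (w ! j)"
      using snoc.prems[of j] by (simp add: nth_append)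
  qed
  moreover have "- a \<le> X (v @ w) x"
    using snoc.prems[of "length w"] by simp
  ultimately show ?case
    using pos_snoc[of X "v @ w" x] by (simp add: algebra_simps)
qed simp

lemma append_mem_good_set:
  assumes r: "in_tree N r" and r_pos: "\<And>j. j \<le> length r \<Longrightarrow> - B \<le> pos X (take j r)"
    and w_len: "length w = n"
    and w_step: "\<And>j. j < n \<Longrightarrow> enat (w ! j) < N (r @ take j w) \<and> - a \<le> X (r @ take j w) (w ! j)"
    and "0 \<le> a" and B: "B \<le> real (length r + n) * a"
  shows "r @ w \<in> good_set N X (2 * a) (length r + n)"
proof -
  have "- (real (length r + n) * (2 * a)) \<le> pos X (take j (r @ w))" if "j \<le> length r + n" for j
  proof (cases "j \<le> length r")
    case True
    have "0 \<le> real (length r + n) * a"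
      using \<open>0 \<le> a\<close> by simp
    then have "- (real (length r + n) * (2 * a)) \<le> pos X (take j r)"
      using r_pos[OF True] B by linarith
    then show ?thesis
      using True by simp
  next
    case False
    then obtain l where l: "j = length r + l"
      using le_Suc_ex[of "length r" j] by auto
    with that have "l \<le> n"
      by simp
    have "pos X r - real (length (take l w)) * a \<le> pos X (r @ take l w)"
      using w_step w_len \<open>l \<le> n\<close> by (intro pos_append_ge) auto
    moreover have "real (length (take l w)) * a \<le> real (length r + n) * a"
      using w_len \<open>0 \<le> a\<close> by (intro mult_right_mono) auto
    moreover have "- B \<le> pos X r"
      using r_pos[of "length r"] by simp
    ultimately show ?thesis
      using l B by simp
  qed
  moreover have "in_tree N (r @ w)"
    using r w_step w_len by (simp add: in_tree_append)
  ultimately show ?thesis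
    using w_len by (simp add: good_set_def)
qed

lemma card_trunc_desc_le_card_good_set:
  fixes \<zeta> :: "nat list \<Rightarrow> pp" and a :: real and r :: "nat list" and n :: nat
  defines "S \<equiv> good_set (\<lambda>u. fst (\<zeta> u)) (\<lambda>u. snd (\<zeta> u)) (2 * a) (length r + n)"
  assumes "0 \<le> a" and r: "in_tree (\<lambda>u. fst (\<zeta> u)) r"
    and r_pos: "\<And>j. j \<le> length r \<Longrightarrow> - B \<le> pos (\<lambda>u. snd (\<zeta> u)) (take j r)"
    and B: "B \<le> real (length r + n) * a" and "finite S"
  shows "card (trunc_desc K a \<zeta> r n) \<le> card S"
proof -
  have subset: "(@) r ` trunc_desc K a \<zeta> r n \<subseteq> S"
  proof
    fix u assume "u \<in> (@) r ` trunc_desc K a \<zeta> r n"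
    then obtain w where "u = r @ w" "w \<in> trunc_desc K a \<zeta> r n"
      by blast
    then show "u \<in> S"
      unfolding S_def using \<open>0 \<le> a\<close> r r_pos B
      by (auto simp: trunc_desc_def kept_def intro!: append_mem_good_set)
  qed
  then show ?thesis
    using card_mono[OF \<open>finite S\<close> subset] card_image[of "(@) r" "trunc_desc K a \<zeta> r n"]
    by (simp add: inj_on_def)
qed

lemma eventually_card_good_set_ge:
  fixes \<zeta> :: "nat list \<Rightarrow> pp"
  assumes "0 < a" and r: "in_tree (\<lambda>u. fst (\<zeta> u)) r"
    and growth: "eventually (\<lambda>n. c * m ^ n \<le> trunc_gen K a \<zeta> r n) sequentially"
    and "0 < c" "0 < \<rho>" "\<rho> < m"
  shows "eventually (\<lambda>n. let S = good_set (\<lambda>u. fst (\<zeta> u)) (\<lambda>u. snd (\<zeta> u)) (2 * a) n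
                         in infinite S \<or> \<rho> ^ n \<le> real (card S)) sequentially"
proof -
  define P where "P n \<longleftrightarrow> (let S = good_set (\<lambda>u. fst (\<zeta> u)) (\<lambda>u. snd (\<zeta> u)) (2 * a) n
                              in infinite S \<or> \<rho> ^ n \<le> real (card S))" for n
  define B where "B = (\<Sum>j\<le>length r. \<bar>pos (\<lambda>u. snd (\<zeta> u)) (take j r)\<bar>)"
  have r_pos: "- B \<le> pos (\<lambda>u. snd (\<zeta> u)) (take j r)" if "j \<le> length r" for j
    using that member_le_sum[of j "{..length r}" "\<lambda>j. \<bar>pos (\<lambda>u. snd (\<zeta> u)) (take j r)\<bar>"]
    unfolding B_def by simp
  obtain n0 :: nat where "B / a \<le> n0"
    using real_arch_simple by blast
  then have "B \<le> real n0 * a"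
    using \<open>0 < a\<close> by (simp add: field_simps)
  then have "eventually (\<lambda>n. B \<le> real (length r + n) * a) sequentially"
    using \<open>0 < a\<close> by (intro eventually_sequentiallyI[of n0]) (auto intro: order_trans mult_right_mono)
  moreover have "eventually (\<lambda>n. \<rho> ^ length r * (\<rho> / m) ^ n < c) sequentially"
    using \<open>0 < c\<close> \<open>0 < \<rho>\<close> \<open>\<rho> < m\<close>
    by (intro order_tendstoD(2)[OF tendsto_mult_right_zero[OF LIMSEQ_power_zero]]) auto
  ultimately have "eventually (\<lambda>n. P (n + length r)) sequentially"
    using growth
  proof eventually_elim
    case (elim n)
    have "\<rho> ^ (length r + n) = \<rho> ^ length r * (\<rho> / m) ^ n * m ^ n"
      using \<open>0 < \<rho>\<close> \<open>\<rho> < m\<close> by (simp add: power_add power_divide)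
    also have "\<dots> \<le> c * m ^ n"
      using elim(2) \<open>0 < \<rho>\<close> \<open>\<rho> < m\<close> by (intro mult_right_mono) auto
    also have "\<dots> \<le> real (card (trunc_desc K a \<zeta> r n))"
      using elim(3) by (simp add: trunc_gen_eq_card)
    finally show ?case
      using card_trunc_desc_le_card_good_set[OF _ r r_pos elim(1)] \<open>0 < a\<close>
      by (auto simp: P_def Let_def add.commute[of n] intro: order_trans)
  qed
  then have "eventually P sequentially"
    by (simp only: eventually_sequentially_seg)
  then show ?thesis
    unfolding P_def .
qed

section \<open>Configurations and locality\<close>

abbreviation config_space :: "(nat list \<Rightarrow> pp) measure" where
  "config_space \<equiv> \<Pi>\<^sub>M u\<in>UNIV. pp_space"

lemma space_pp_space [simp]: "space pp_space = UNIV"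
  by (simp add: pp_space_def space_pair_measure space_PiM)

lemma space_config_space [simp]: "space config_space = UNIV"
  by (simp add: space_PiM)

lemma measurable_kept [measurable]: "Measurable.pred pp_space (\<lambda>z. kept a z i)"
  unfolding kept_def pp_space_def by measurable

lemma measurable_trunc_gen [measurable]:
  "(\<lambda>\<zeta>. trunc_gen K a \<zeta> v n) \<in> borel_measurable config_space"
  by (induction n arbitrary: v) auto

lemma measurable_trunc_defect [measurable]:
  "(\<lambda>\<zeta>. trunc_defect K a m \<zeta> v n) \<in> borel_measurable config_space"
  unfolding trunc_defect_def by measurable

definition bounded_rv :: "((nat list \<Rightarrow> pp) \<Rightarrow> real) \<Rightarrow> bool" where
  "bounded_rv F \<longleftrightarrow> F \<in> borel_measurable config_space \<and> (\<exists>c. \<forall>\<zeta>. \<bar>F \<zeta>\<bar> \<le> c)"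

lemma bounded_rvI: "F \<in> borel_measurable config_space \<Longrightarrow> (\<And>\<zeta>. \<bar>F \<zeta>\<bar> \<le> c) \<Longrightarrow> bounded_rv F"
  unfolding bounded_rv_def by blast

lemma bounded_rv_const [simp]: "bounded_rv (\<lambda>_. c)"
  by (rule bounded_rvI[where c="\<bar>c\<bar>"]) auto

lemma bounded_rv_at_vertex:
  "h \<in> borel_measurable pp_space \<Longrightarrow> (\<And>z. \<bar>h z\<bar> \<le> c) \<Longrightarrow> bounded_rv (\<lambda>\<zeta>. h (\<zeta> v))"
  by (rule bounded_rvI[where c=c]) auto

lemma bounded_rv_kept [simp]: "bounded_rv (\<lambda>\<zeta>. of_bool (kept a (\<zeta> v) i))"
  by (rule bounded_rv_at_vertex[where c=1]) auto

lemma bounded_rv_indicator: "S \<in> sets config_space \<Longrightarrow> bounded_rv (indicator S)"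
  by (rule bounded_rvI[where c=1]) (auto simp: indicator_def)

lemma bounded_rv_add: "bounded_rv F \<Longrightarrow> bounded_rv G \<Longrightarrow> bounded_rv (\<lambda>\<zeta>. F \<zeta> + G \<zeta>)"
  unfolding bounded_rv_def by (fastforce intro: abs_triangle_ineq[THEN order_trans] add_mono)

lemma bounded_rv_diff: "bounded_rv F \<Longrightarrow> bounded_rv G \<Longrightarrow> bounded_rv (\<lambda>\<zeta>. F \<zeta> - G \<zeta>)"
  unfolding bounded_rv_def by (fastforce intro: abs_triangle_ineq4[THEN order_trans] add_mono)

lemma bounded_rv_mult: "bounded_rv F \<Longrightarrow> bounded_rv G \<Longrightarrow> bounded_rv (\<lambda>\<zeta>. F \<zeta> * G \<zeta>)"
  unfolding bounded_rv_def abs_mult by (fastforce intro: mult_mono)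

lemma bounded_rv_sum: "(\<And>i. i \<in> I \<Longrightarrow> bounded_rv (F i)) \<Longrightarrow> bounded_rv (\<lambda>\<zeta>. \<Sum>i\<in>I. F i \<zeta>)"
  by (induction I rule: infinite_finite_induct) (auto intro: bounded_rv_add)

lemma bounded_rv_trunc_gen [simp]: "bounded_rv (\<lambda>\<zeta>. trunc_gen K a \<zeta> v n)"
  by (intro bounded_rvI[where c="real K ^ n"] measurable_trunc_gen abs_trunc_gen_le)

lemma bounded_rv_trunc_defect [simp]: "bounded_rv (\<lambda>\<zeta>. trunc_defect K a m \<zeta> v n)"
  unfolding trunc_defect_def by (intro bounded_rv_diff bounded_rv_mult bounded_rv_const bounded_rv_trunc_gen)

definition depends_only_on :: "nat list set \<Rightarrow> ((nat list \<Rightarrow> pp) \<Rightarrow> 'b) \<Rightarrow> bool" where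
  "depends_only_on A F \<longleftrightarrow> (\<forall>\<zeta> \<zeta>'. (\<forall>u\<in>A. \<zeta> u = \<zeta>' u) \<longrightarrow> F \<zeta> = F \<zeta>')"

lemma depends_only_on_mono: "depends_only_on A F \<Longrightarrow> A \<subseteq> B \<Longrightarrow> depends_only_on B F"
  unfolding depends_only_on_def by blast

lemma depends_only_on_vertex: "depends_only_on {v} (\<lambda>\<zeta>. h (\<zeta> v))"
  unfolding depends_only_on_def by simp

lemma depends_only_on_mult:
  "depends_only_on A F \<Longrightarrow> depends_only_on A G \<Longrightarrow> depends_only_on A (\<lambda>\<zeta>. F \<zeta> * G \<zeta>)"
  unfolding depends_only_on_def by metis

definition subtree :: "nat list \<Rightarrow> nat list set" where
  "subtree v = {v @ w | w. True}"

lemma mem_subtree_self [simp]: "v \<in> subtree v"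
  by (auto simp: subtree_def)

lemma not_mem_subtree_child [simp]: "v \<notin> subtree (v @ [i])"
  by (auto simp: subtree_def)

lemma subtree_child_subset: "subtree (v @ [i]) \<subseteq> subtree v"
  by (auto simp: subtree_def)

lemma disjoint_subtree_children: "i \<noteq> j \<Longrightarrow> subtree (v @ [i]) \<inter> subtree (v @ [j]) = {}"
  by (auto simp: subtree_def)

lemma trunc_gen_depends_only_on: "depends_only_on (subtree v) (\<lambda>\<zeta>. trunc_gen K a \<zeta> v n)"
proof (induction n arbitrary: v)
  case (Suc n)
  show ?case unfolding depends_only_on_def
  proof (intro allI impI)
    fix \<zeta> \<zeta>' :: "nat list \<Rightarrow> pp" assume eq: "\<forall>u\<in>subtree v. \<zeta> u = \<zeta>' u"
    have "trunc_gen K a \<zeta> (v @ [i]) n = trunc_gen K a \<zeta>' (v @ [i]) n" for i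
      using Suc[of "v @ [i]"] eq subtree_child_subset unfolding depends_only_on_def by blast
    then show "trunc_gen K a \<zeta> v (Suc n) = trunc_gen K a \<zeta>' v (Suc n)"
      using eq by simp
  qed
qed (simp add: depends_only_on_def)

lemma trunc_defect_depends_only_on: "depends_only_on (subtree v) (\<lambda>\<zeta>. trunc_defect K a m \<zeta> v n)"
  using trunc_gen_depends_only_on[of v K a] unfolding depends_only_on_def trunc_defect_def by metis

text \<open>Outside \<open>A\<close> the configuration is replaced by an arbitrary fixed one, so that a functional
  depending only on the vertices in \<open>A\<close> becomes a function of the restriction to \<open>A\<close>.\<close>
definition extend_config :: "nat list set \<Rightarrow> (nat list \<Rightarrow> pp) \<Rightarrow> nat list \<Rightarrow> pp" where
  "extend_config A \<zeta> = (\<lambda>u. if u \<in> A then \<zeta> u else (0, \<lambda>_. 0))"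

lemma measurable_extend_config [measurable]:
  "extend_config A \<in> (\<Pi>\<^sub>M u\<in>A. pp_space) \<rightarrow>\<^sub>M config_space"
  unfolding extend_config_def
proof (rule measurable_PiM_single')
  fix u
  show "(\<lambda>\<zeta>. if u \<in> A then \<zeta> u else (0, \<lambda>_. 0)) \<in> (\<Pi>\<^sub>M u\<in>A. pp_space) \<rightarrow>\<^sub>M pp_space"
    by (cases "u \<in> A") auto
qed auto

lemma depends_only_on_extend_config:
  "depends_only_on A F \<Longrightarrow> F (extend_config A (restrict \<zeta> A)) = F \<zeta>"
  unfolding depends_only_on_def extend_config_def by simp

definition spine_block :: "nat \<Rightarrow> nat list set" where
  "spine_block k = insert (spine k) (subtree (branch k))"

lemma spine_not_mem_subtree_branch: "spine j \<notin> subtree (branch k)"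
proof
  assume "spine j \<in> subtree (branch k)"
  then obtain w where "spine j = branch k @ w"
    by (auto simp: subtree_def)
  then have "1 \<in> set (spine j)"
    by simp
  then show False
    by simp
qed

lemma disjoint_subtree_branch:
  assumes "k < k'"
  shows "subtree (branch k) \<inter> subtree (branch k') = {}"
proof -
  have "u ! k = 1" if "u \<in> subtree (branch k)" for u
    using that by (auto simp: subtree_def nth_append)
  moreover have "u ! k = 0" if "u \<in> subtree (branch k')" for u
    using that assms by (auto simp: subtree_def nth_append)
  ultimately show ?thesis
    by fastforce
qed

lemma disjoint_family_spine_block: "disjoint_family spine_block"
  unfolding disjoint_family_on_def
proof (intro ballI impI)
  fix k k' :: nat
  assume "k \<noteq> k'"
  then have "subtree (branch k) \<inter> subtree (branch k') = {}"
    using disjoint_subtree_branch by (metis Int_commute linorder_neqE_nat)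
  then show "spine_block k \<inter> spine_block k' = {}"
    using \<open>k \<noteq> k'\<close> spine_not_mem_subtree_branch by (auto simp: spine_block_def)
qed

section \<open>Independent reproduction laws\<close>

locale iid_tree = prob_space M for M :: "'w measure" +
  fixes Z :: "nat list \<Rightarrow> 'w \<Rightarrow> pp" and LL :: "pp measure"
  assumes indep_Z: "indep_vars (\<lambda>_. pp_space) Z UNIV"
    and distr_Z: "\<And>u. distr M pp_space (Z u) = LL"
begin

definition config :: "'w \<Rightarrow> nat list \<Rightarrow> pp" where
  "config \<omega> = (\<lambda>u. Z u \<omega>)"

lemma measurable_Z [measurable]: "Z u \<in> M \<rightarrow>\<^sub>M pp_space"
  using indep_Z by (auto simp: indep_vars_def)

lemma measurable_config [measurable]: "config \<in> M \<rightarrow>\<^sub>M config_space"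
  unfolding config_def by (rule measurable_PiM_single') auto

lemma sets_LL: "sets LL = sets pp_space"
  using distr_Z[of "[]"] by (metis sets_distr)

lemma space_LL [simp]: "space LL = UNIV"
  using distr_Z[of "[]"] by (metis space_distr space_pp_space)

lemma prob_space_LL: "prob_space LL"
  using prob_space_distr[OF measurable_Z[of "[]"]] distr_Z by simp

lemma borel_measurable_LL: "f \<in> borel_measurable pp_space \<Longrightarrow> f \<in> borel_measurable LL"
  by (simp add: measurable_cong_sets[OF sets_LL refl])

lemma indep_var_config:
  assumes "A \<inter> B = {}" "F \<in> borel_measurable config_space" "G \<in> borel_measurable config_space"
    and "depends_only_on A F" "depends_only_on B G"
  shows "indep_var borel (\<lambda>\<omega>. F (config \<omega>)) borel (\<lambda>\<omega>. G (config \<omega>))"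
proof -
  have "indep_var (\<Pi>\<^sub>M u\<in>A. pp_space) (\<lambda>\<omega>. restrict (config \<omega>) A)
                  (\<Pi>\<^sub>M u\<in>B. pp_space) (\<lambda>\<omega>. restrict (config \<omega>) B)"
    using indep_var_restrict[OF indep_Z assms(1)] by (simp add: config_def)
  then have "indep_var borel ((F \<circ> extend_config A) \<circ> (\<lambda>\<omega>. restrict (config \<omega>) A))
                       borel ((G \<circ> extend_config B) \<circ> (\<lambda>\<omega>. restrict (config \<omega>) B))"
    by (rule indep_var_compose) (use assms(2,3) in auto)
  then show ?thesis
    using assms(4,5) by (simp add: comp_def depends_only_on_extend_config)
qed

definition Ec :: "((nat list \<Rightarrow> pp) \<Rightarrow> real) \<Rightarrow> real" where
  "Ec F = expectation (\<lambda>\<omega>. F (config \<omega>))"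

lemma integrable_config:
  assumes "bounded_rv F"
  shows "integrable M (\<lambda>\<omega>. F (config \<omega>))"
proof -
  obtain c where "F \<in> borel_measurable config_space" "\<And>\<zeta>. \<bar>F \<zeta>\<bar> \<le> c"
    using assms by (auto simp: bounded_rv_def)
  then show ?thesis by (intro integrable_const_bound[where B=c]) auto
qed

lemma Ec_mult_indep:
  assumes "A \<inter> B = {}" "bounded_rv F" "bounded_rv G"
    and "depends_only_on A F" "depends_only_on B G"
  shows "Ec (\<lambda>\<zeta>. F \<zeta> * G \<zeta>) = Ec F * Ec G"
  unfolding Ec_def
  using assms by (intro indep_var_lebesgue_integral indep_var_config integrable_config)
    (auto simp: bounded_rv_def)

lemma Ec_diff: "bounded_rv F \<Longrightarrow> bounded_rv G \<Longrightarrow> Ec (\<lambda>\<zeta>. F \<zeta> - G \<zeta>) = Ec F - Ec G"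
  unfolding Ec_def by (intro Bochner_Integration.integral_diff integrable_config)

lemma Ec_sum:
  "(\<And>i. i \<in> I \<Longrightarrow> bounded_rv (F i)) \<Longrightarrow> Ec (\<lambda>\<zeta>. \<Sum>i\<in>I. F i \<zeta>) = (\<Sum>i\<in>I. Ec (F i))"
  unfolding Ec_def by (intro Bochner_Integration.integral_sum integrable_config)

lemma Ec_cmult: "Ec (\<lambda>\<zeta>. c * F \<zeta>) = c * Ec F"
  by (simp add: Ec_def)

lemma Ec_const [simp]: "Ec (\<lambda>_. c) = c"
  by (simp add: Ec_def prob_space)

lemma Ec_mono: "bounded_rv F \<Longrightarrow> bounded_rv G \<Longrightarrow> (\<And>\<zeta>. F \<zeta> \<le> G \<zeta>) \<Longrightarrow> Ec F \<le> Ec G"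
  unfolding Ec_def by (intro integral_mono integrable_config)

lemma Ec_vertex:
  assumes "h \<in> borel_measurable pp_space" "\<And>z. \<bar>h z\<bar> \<le> c"
  shows "Ec (\<lambda>\<zeta>. h (\<zeta> v)) = (\<integral>z. h z \<partial>LL)"
proof -
  have "(\<integral>z. h z \<partial>LL) = (\<integral>\<omega>. h (Z v \<omega>) \<partial>M)"
    unfolding distr_Z[of v, symmetric] using assms(1) by (simp add: integral_distr)
  then show ?thesis by (simp add: Ec_def config_def)
qed

lemma Ec_indicator: "Ec (indicator S) = prob (config -` S \<inter> space M)"
proof -
  have "(\<lambda>\<omega>. indicator S (config \<omega>) :: real) = indicator (config -` S)"
    by (auto simp: indicator_def)
  then show ?thesis by (simp add: Ec_def)
qed

lemma Ec_indicator_vertex: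
  assumes "S \<in> sets pp_space"
  shows "Ec (\<lambda>\<zeta>. indicator S (\<zeta> u)) = measure LL S"
proof -
  interpret LL: prob_space LL
    by (rule prob_space_LL)
  have "Ec (\<lambda>\<zeta>. indicator S (\<zeta> u)) = (\<integral>z. indicator S z \<partial>LL)"
    using assms by (intro Ec_vertex[where c=1]) auto
  then show ?thesis
    using assms by (simp add: sets_LL LL.emeasure_eq_measure)
qed

lemma integrable_kept_count: "integrable LL (\<lambda>z. \<Sum>i<n. of_bool (kept a z i) :: real)"
proof -
  interpret LL: prob_space LL
    by (rule prob_space_LL)
  have "\<bar>\<Sum>i<n. of_bool (kept a z i) :: real\<bar> \<le> real n" for z
    using sum_mono[of "{..<n}" "\<lambda>i. of_bool (kept a z i) :: real" "\<lambda>_. 1"] by (simp add: sum_nonneg)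
  moreover have "(\<lambda>z. \<Sum>i<n. of_bool (kept a z i) :: real) \<in> borel_measurable LL"
    by (rule borel_measurable_LL) measurable
  ultimately show ?thesis
    by (intro LL.integrable_const_bound[where B="real n"] AE_I2) auto
qed

lemma exists_supercritical_truncation:
  assumes A1b: "1 < (\<integral>\<^sup>+ z. ennreal_of_enat (fst z) \<partial>LL)"
  shows "\<exists>K a. 0 < a \<and> 1 < (\<integral>z. (\<Sum>i<K. of_bool (kept a z i) :: real) \<partial>LL)"
proof (rule ccontr)
  interpret LL: prob_space LL
    by (rule prob_space_LL)
  assume contra: "\<not> ?thesis"
  have le_1: "(\<integral>z. (\<Sum>i<n. of_bool (kept (real n) z i) :: real) \<partial>LL) \<le> 1" for n :: nat
  proof (cases n)
    case (Suc m)
    then have "0 < real n"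
      by simp
    moreover from contra have "\<not> (0 < real n \<and> 1 < (\<integral>z. (\<Sum>i<n. of_bool (kept (real n) z i) :: real) \<partial>LL))"
      by blast
    ultimately show ?thesis
      by simp
  qed simp
  \<comment> \<open>with \<open>K = a = n\<close> the truncated offspring number increases to \<open>#L\<close>\<close>
  define f where "f n z = ennreal (\<Sum>i<n. of_bool (kept (real n) z i))" for n z
  have f_meas: "f n \<in> borel_measurable LL" for n
    unfolding f_def by (rule borel_measurable_LL) measurable
  have "incseq f"
    unfolding incseq_def le_fun_def f_def by (auto intro!: ennreal_leI kept_count_mono simp del: sum_of_bool_eq)
  have "integral\<^sup>N LL (f n) \<le> 1" for n
  proof -
    have "integral\<^sup>N LL (f n) = ennreal (\<integral>z. (\<Sum>i<n. of_bool (kept (real n) z i) :: real) \<partial>LL)"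
      unfolding f_def by (intro nn_integral_eq_integral integrable_kept_count AE_I2) (simp add: sum_nonneg)
    also have "\<dots> \<le> 1"
      using le_1[of n] by (simp add: ennreal_leI[of _ 1, simplified])
    finally show ?thesis .
  qed
  then have "(SUP n. integral\<^sup>N LL (f n)) \<le> 1"
    by (rule SUP_least)
  moreover have "(\<integral>\<^sup>+ z. ennreal_of_enat (fst z) \<partial>LL) \<le> (\<integral>\<^sup>+ z. (SUP n. f n z) \<partial>LL)"
    unfolding f_def by (rule nn_integral_mono, rule count_le_SUP_kept_count)
  moreover have "(\<integral>\<^sup>+ z. (SUP n. f n z) \<partial>LL) = (SUP n. integral\<^sup>N LL (f n))"
    by (rule nn_integral_monotone_convergence_SUP[OF \<open>incseq f\<close> f_meas])
  ultimately show False
    using A1b by simp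
qed

lemma prob_many_children_pos:
  assumes A1b: "1 < (\<integral>\<^sup>+ z. ennreal_of_enat (fst z) \<partial>LL)"
  shows "0 < measure LL {z. enat 1 < fst z}"
proof (rule ccontr)
  assume not_pos: "\<not> ?thesis"
  interpret LL: prob_space LL
    by (rule prob_space_LL)
  have "{z \<in> space pp_space. enat 1 < fst z} \<in> sets pp_space"
    unfolding pp_space_def by measurable
  then have sets: "{z. enat 1 < fst z} \<in> sets LL"
    by (simp add: sets_LL)
  from not_pos have "measure LL {z. enat 1 < fst z} = 0"
    using measure_nonneg[of LL "{z. enat 1 < fst z}"] by linarith
  then have "{z. enat 1 < fst z} \<in> null_sets LL"
    using sets by (simp add: null_sets_def LL.emeasure_eq_measure)
  moreover have "ennreal_of_enat x \<le> 1" if "\<not> enat 1 < x" for x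
    using that ennreal_of_enat_le_iff[of x 1] by (simp add: not_less one_enat_def)
  ultimately have "AE z in LL. ennreal_of_enat (fst z) \<le> 1"
    by (auto elim!: AE_I')
  then have "(\<integral>\<^sup>+ z. ennreal_of_enat (fst z) \<partial>LL) \<le> (\<integral>\<^sup>+ z. 1 \<partial>LL)"
    by (rule nn_integral_mono_AE)
  also have "\<dots> = 1"
    using LL.emeasure_space_1 by (simp only: nn_integral_const mult_1)
  finally show False
    using A1b leD by blast
qed

lemma AE_every_vertex_has_child:
  assumes A1a: "emeasure LL {z \<in> space LL. fst z = 0} = 0"
  shows "AE \<omega> in M. \<forall>u. fst (Z u \<omega>) \<noteq> 0"
  unfolding AE_all_countable
proof
  fix u
  have "{z \<in> space pp_space. fst z = 0} \<in> sets pp_space"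
    unfolding pp_space_def by measurable
  then have sets: "{z. fst z = 0} \<in> sets pp_space"
    by simp
  then have events: "Z u -` {z. fst z = 0} \<inter> space M \<in> events"
    by (rule measurable_sets[OF measurable_Z])
  have "emeasure M (Z u -` {z. fst z = 0} \<inter> space M) = emeasure (distr M pp_space (Z u)) {z. fst z = 0}"
    using sets by (simp add: emeasure_distr)
  also have "\<dots> = 0"
    using A1a distr_Z[of u] by simp
  finally have "emeasure M (Z u -` {z. fst z = 0} \<inter> space M) = 0" .
  then show "AE \<omega> in M. fst (Z u \<omega>) \<noteq> 0"
    using events by (intro AE_I[where N="Z u -` {z. fst z = 0} \<inter> space M"]) auto
qed

end

section \<open>Moments of the truncated population\<close>

locale truncated_gw = iid_tree +
  fixes K :: nat and a :: real
begin

definition p :: "nat \<Rightarrow> real" where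
  "p i = (\<integral>z. of_bool (kept a z i) \<partial>LL)"

definition mu :: real where
  "mu = (\<Sum>i<K. p i)"

lemma mu_eq_integral: "mu = (\<integral>z. (\<Sum>i<K. of_bool (kept a z i) :: real) \<partial>LL)"
proof -
  interpret LL: prob_space LL
    by (rule prob_space_LL)
  have "(\<lambda>z. of_bool (kept a z i) :: real) \<in> borel_measurable LL" for i
    by (rule borel_measurable_LL) measurable
  then have "integrable LL (\<lambda>z. of_bool (kept a z i) :: real)" for i
    by (intro LL.integrable_const_bound[where B=1] AE_I2) auto
  then show ?thesis
    unfolding mu_def p_def by (rule Bochner_Integration.integral_sum[symmetric])
qed

lemma Ec_kept: "Ec (\<lambda>\<zeta>. of_bool (kept a (\<zeta> v) i)) = p i"
  unfolding p_def by (rule Ec_vertex[where c=1]) auto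

lemma p_nonneg: "0 \<le> p i" and p_le_1: "p i \<le> 1"
  using Ec_mono[OF bounded_rv_const bounded_rv_kept, of 0 a "[]" i]
    Ec_mono[OF bounded_rv_kept bounded_rv_const, of a "[]" i 1]
  by (simp_all add: Ec_kept)

lemma mu_nonneg: "0 \<le> mu"
  unfolding mu_def by (intro sum_nonneg p_nonneg)

lemma mu_le: "mu \<le> real K"
  unfolding mu_def using sum_mono[of "{..<K}" p "\<lambda>_. 1"] p_le_1 by simp

lemma Ec_kept_mult:
  assumes "bounded_rv F" "depends_only_on (subtree (v @ [i])) F"
  shows "Ec (\<lambda>\<zeta>. of_bool (kept a (\<zeta> v) i) * F \<zeta>) = p i * Ec F"
  using Ec_mult_indep[of "{v}" "subtree (v @ [i])" "\<lambda>\<zeta>. of_bool (kept a (\<zeta> v) i)" F] assms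
    depends_only_on_vertex[of v "\<lambda>z. of_bool (kept a z i)"]
  by (simp add: Ec_kept)

lemma Ec_kept_mult_kept_mult:
  assumes "i \<noteq> j" "bounded_rv F" "bounded_rv G"
    and F: "depends_only_on (subtree (v @ [i])) F" and G: "depends_only_on (subtree (v @ [j])) G"
  shows "Ec (\<lambda>\<zeta>. (of_bool (kept a (\<zeta> v) i) * F \<zeta>) * (of_bool (kept a (\<zeta> v) j) * G \<zeta>))
       = Ec (\<lambda>\<zeta>. of_bool (kept a (\<zeta> v) i) * of_bool (kept a (\<zeta> v) j)) * Ec F * Ec G"
proof -
  let ?k = "\<lambda>\<zeta>. of_bool (kept a (\<zeta> v) i) * of_bool (kept a (\<zeta> v) j) :: real"
  have k: "depends_only_on {v} ?k" "bounded_rv ?k"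
    using depends_only_on_vertex[of v "\<lambda>z. of_bool (kept a z i) * of_bool (kept a z j)"]
    by (simp_all add: bounded_rv_mult)
  have "Ec (\<lambda>\<zeta>. (of_bool (kept a (\<zeta> v) i) * F \<zeta>) * (of_bool (kept a (\<zeta> v) j) * G \<zeta>))
      = Ec (\<lambda>\<zeta>. (?k \<zeta> * F \<zeta>) * G \<zeta>)"
    by (simp add: ac_simps)
  also have "\<dots> = Ec (\<lambda>\<zeta>. ?k \<zeta> * F \<zeta>) * Ec G"
  proof (rule Ec_mult_indep[where A="{v} \<union> subtree (v @ [i])" and B="subtree (v @ [j])"])
    show "({v} \<union> subtree (v @ [i])) \<inter> subtree (v @ [j]) = {}"
      using disjoint_subtree_children[OF assms(1), of v] by auto
    show "depends_only_on ({v} \<union> subtree (v @ [i])) (\<lambda>\<zeta>. ?k \<zeta> * F \<zeta>)"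
      by (rule depends_only_on_mult[OF depends_only_on_mono[OF k(1)] depends_only_on_mono[OF F]])
        auto
  qed (use assms k in \<open>auto intro: bounded_rv_mult\<close>)
  also have "Ec (\<lambda>\<zeta>. ?k \<zeta> * F \<zeta>) = Ec ?k * Ec F"
    by (rule Ec_mult_indep[where A="{v}" and B="subtree (v @ [i])"]) (use assms k in auto)
  finally show ?thesis .
qed

lemma Ec_children_sum:
  assumes "\<And>w. bounded_rv (Y w)" "\<And>w. depends_only_on (subtree w) (Y w)" "\<And>w. Ec (Y w) = e"
  shows "Ec (\<lambda>\<zeta>. \<Sum>i<K. of_bool (kept a (\<zeta> v) i) * Y (v @ [i]) \<zeta>) = mu * e"
proof -
  have "Ec (\<lambda>\<zeta>. \<Sum>i<K. of_bool (kept a (\<zeta> v) i) * Y (v @ [i]) \<zeta>)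
      = (\<Sum>i<K. Ec (\<lambda>\<zeta>. of_bool (kept a (\<zeta> v) i) * Y (v @ [i]) \<zeta>))"
    using assms(1) by (intro Ec_sum bounded_rv_mult bounded_rv_kept)
  also have "\<dots> = (\<Sum>i<K. p i * e)"
    using assms by (simp add: Ec_kept_mult)
  finally show ?thesis by (simp add: mu_def sum_distrib_right)
qed

lemma Ec_children_sum_sq:
  assumes Y: "\<And>w. bounded_rv (Y w)" "\<And>w. depends_only_on (subtree w) (Y w)"
    and e: "\<And>w. Ec (Y w) = e" and s: "\<And>w. Ec (\<lambda>\<zeta>. (Y w \<zeta>)\<^sup>2) \<le> s"
  shows "Ec (\<lambda>\<zeta>. (\<Sum>i<K. of_bool (kept a (\<zeta> v) i) * Y (v @ [i]) \<zeta>)\<^sup>2) \<le> mu * s + (real K * e)\<^sup>2"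
proof -
  define F where "F i \<zeta> = of_bool (kept a (\<zeta> v) i) * Y (v @ [i]) \<zeta>" for i \<zeta>
  have F: "bounded_rv (F i)" for i
    unfolding F_def using Y(1) by (intro bounded_rv_mult bounded_rv_kept)
  have diag: "Ec (\<lambda>\<zeta>. F i \<zeta> * F i \<zeta>) \<le> p i * s" for i
  proof -
    have "(\<lambda>\<zeta>. F i \<zeta> * F i \<zeta>) = (\<lambda>\<zeta>. of_bool (kept a (\<zeta> v) i) * (Y (v @ [i]) \<zeta>)\<^sup>2)"
      by (simp add: F_def fun_eq_iff power2_eq_square)
    then have "Ec (\<lambda>\<zeta>. F i \<zeta> * F i \<zeta>) = p i * Ec (\<lambda>\<zeta>. (Y (v @ [i]) \<zeta>)\<^sup>2)"
      using Y by (simp add: Ec_kept_mult bounded_rv_mult power2_eq_square depends_only_on_mult)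
    also have "\<dots> \<le> p i * s"
      by (intro mult_left_mono s p_nonneg)
    finally show ?thesis .
  qed
  have off_diag: "Ec (\<lambda>\<zeta>. F i \<zeta> * F j \<zeta>) \<le> e\<^sup>2" if "i \<noteq> j" for i j
  proof -
    let ?k = "\<lambda>\<zeta>. of_bool (kept a (\<zeta> v) i) * of_bool (kept a (\<zeta> v) j) :: real"
    have "Ec ?k \<le> 1" "0 \<le> Ec ?k"
      using Ec_mono[of ?k "\<lambda>_. 1"] Ec_mono[of "\<lambda>_. 0" ?k] by (simp_all add: bounded_rv_mult)
    then have "Ec ?k * e * e \<le> e\<^sup>2"
      by (simp add: power2_eq_square mult_left_le_one_le mult.assoc)
    then show ?thesis
      using that Y by (simp add: F_def Ec_kept_mult_kept_mult e)
  qed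
  have term_le: "Ec (\<lambda>\<zeta>. F i \<zeta> * F j \<zeta>) \<le> (if i = j then p i * s else 0) + e\<^sup>2" for i j
    by (cases "i = j") (simp_all add: diag off_diag add_increasing2)
  have "Ec (\<lambda>\<zeta>. (\<Sum>i<K. F i \<zeta>)\<^sup>2) = Ec (\<lambda>\<zeta>. \<Sum>i<K. \<Sum>j<K. F i \<zeta> * F j \<zeta>)"
    by (simp add: power2_eq_square sum_product)
  also have "\<dots> = (\<Sum>i<K. \<Sum>j<K. Ec (\<lambda>\<zeta>. F i \<zeta> * F j \<zeta>))"
    using F by (simp add: Ec_sum bounded_rv_sum bounded_rv_mult)
  also have "\<dots> \<le> (\<Sum>i<K. \<Sum>j<K. (if i = j then p i * s else 0) + e\<^sup>2)"
    by (intro sum_mono term_le)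
  also have "\<dots> = mu * s + (real K * e)\<^sup>2"
    by (simp add: sum.distrib mu_def sum_distrib_right power_mult_distrib power2_eq_square)
  finally show ?thesis by (simp add: F_def)
qed

lemma Ec_trunc_gen: "Ec (\<lambda>\<zeta>. trunc_gen K a \<zeta> v n) = mu ^ n"
proof (induction n arbitrary: v)
  case (Suc n)
  have "Ec (\<lambda>\<zeta>. trunc_gen K a \<zeta> v (Suc n)) = mu * mu ^ n"
    unfolding trunc_gen.simps
    by (rule Ec_children_sum) (simp_all add: trunc_gen_depends_only_on Suc)
  then show ?case by simp
qed simp

text \<open>Chosen so that the second-moment recursion closes: \<open>\<mu> C + K\<^sup>2 \<le> C \<mu>\<^sup>2\<close>.\<close>
definition m2_const :: real where
  "m2_const = 1 + (real K)\<^sup>2 / (mu * (mu - 1))"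

lemma m2_const_ge_1: "1 < mu \<Longrightarrow> 1 \<le> m2_const"
  by (simp add: m2_const_def)

lemma Ec_trunc_gen_sq:
  assumes "1 < mu"
  shows "Ec (\<lambda>\<zeta>. (trunc_gen K a \<zeta> v n)\<^sup>2) \<le> m2_const * mu ^ (2 * n)"
proof (induction n arbitrary: v)
  case 0
  then show ?case using m2_const_ge_1[OF assms] by simp
next
  case (Suc n)
  have "Ec (\<lambda>\<zeta>. (trunc_gen K a \<zeta> v (Suc n))\<^sup>2) \<le> mu * (m2_const * mu ^ (2 * n)) + (real K * mu ^ n)\<^sup>2"
    unfolding trunc_gen.simps
    by (rule Ec_children_sum_sq) (simp_all add: trunc_gen_depends_only_on Ec_trunc_gen Suc)
  also have "\<dots> = (mu * m2_const + (real K)\<^sup>2) * mu ^ (2 * n)"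
    by (simp add: algebra_simps power_mult_distrib power_mult power2_eq_square)
  also have "\<dots> \<le> (m2_const * mu\<^sup>2) * mu ^ (2 * n)"
  proof (rule mult_right_mono)
    have "(real K)\<^sup>2 = (m2_const - 1) * (mu * (mu - 1))"
      using assms by (simp add: m2_const_def)
    moreover have "mu \<le> mu * mu"
      using assms by simp
    ultimately show "mu * m2_const + (real K)\<^sup>2 \<le> m2_const * mu\<^sup>2"
      by (simp add: algebra_simps power2_eq_square)
  qed (use assms in simp)
  finally show ?case
    by (simp add: power_add power_mult power2_eq_square mult.assoc)
qed

lemma Ec_trunc_defect: "Ec (\<lambda>\<zeta>. trunc_defect K a mu \<zeta> v n) = 0"
  unfolding trunc_defect_def
  by (simp add: Ec_diff bounded_rv_mult Ec_cmult Ec_trunc_gen del: trunc_gen.simps)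

lemma Ec_trunc_defect_sq: "Ec (\<lambda>\<zeta>. (trunc_defect K a mu \<zeta> v n)\<^sup>2) \<le> (real K)\<^sup>2 * mu ^ n"
proof (induction n arbitrary: v)
  case 0
  have "\<bar>trunc_defect K a mu \<zeta> v 0\<bar> \<le> real K" for \<zeta>
    using trunc_gen_nonneg[of K a \<zeta> v 1] trunc_gen_le[of K a \<zeta> v 1] mu_nonneg mu_le
    by (simp add: trunc_defect_def abs_le_iff del: trunc_gen.simps(2))
  then have "(trunc_defect K a mu \<zeta> v 0)\<^sup>2 \<le> (real K)\<^sup>2" for \<zeta>
    by (metis abs_le_square_iff abs_of_nat)
  then show ?case
    using Ec_mono[of "\<lambda>\<zeta>. (trunc_defect K a mu \<zeta> v 0)\<^sup>2" "\<lambda>_. (real K)\<^sup>2"]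
    by (simp add: bounded_rv_mult power2_eq_square)
next
  case (Suc n)
  have "Ec (\<lambda>\<zeta>. (trunc_defect K a mu \<zeta> v (Suc n))\<^sup>2) \<le> mu * ((real K)\<^sup>2 * mu ^ n) + (real K * 0)\<^sup>2"
    unfolding trunc_defect_Suc
    by (rule Ec_children_sum_sq) (simp_all add: trunc_defect_depends_only_on Ec_trunc_defect Suc)
  then show ?case by (simp add: algebra_simps)
qed

section \<open>A subtree that keeps growing\<close>

definition rho :: real where
  "rho = root 4 mu"

text \<open>The threshold \<open>\<rho>\<^sup>3\<^sup>n\<close> lies between the standard deviation \<open>\<rho>\<^sup>2\<^sup>n\<close> of the defect and
  \<open>\<mu>\<^sup>n = \<rho>\<^sup>4\<^sup>n\<close>, so that both Chebyshev's bound and the accumulated relative error are geometric.\<close>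
definition stays_large :: "nat list \<Rightarrow> nat \<Rightarrow> (nat list \<Rightarrow> pp) set" where
  "stays_large v N = {\<zeta>. mu ^ N / 2 \<le> trunc_gen K a \<zeta> v N \<and>
                          (\<forall>n\<ge>N. \<bar>trunc_defect K a mu \<zeta> v n\<bar> < rho ^ (3 * n))}"

lemma sets_stays_large [measurable]: "stays_large v N \<in> sets config_space"
proof -
  have "{\<zeta> \<in> space config_space. mu ^ N / 2 \<le> trunc_gen K a \<zeta> v N \<and>
          (\<forall>n. N \<le> n \<longrightarrow> \<bar>trunc_defect K a mu \<zeta> v n\<bar> < rho ^ (3 * n))} \<in> sets config_space"
    by measurable
  then show ?thesis by (simp add: stays_large_def)
qed

lemma stays_large_depends_only_on: "depends_only_on (subtree v) (\<lambda>\<zeta>. \<zeta> \<in> stays_large v N)"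
  unfolding depends_only_on_def
proof (intro allI impI)
  fix \<zeta> \<zeta>' :: "nat list \<Rightarrow> pp" assume "\<forall>u\<in>subtree v. \<zeta> u = \<zeta>' u"
  then have "trunc_gen K a \<zeta> v N = trunc_gen K a \<zeta>' v N"
    "\<And>n. trunc_defect K a mu \<zeta> v n = trunc_defect K a mu \<zeta>' v n"
    using trunc_gen_depends_only_on[of v K a N] trunc_defect_depends_only_on[of v K a mu]
    unfolding depends_only_on_def by blast+
  then show "(\<zeta> \<in> stays_large v N) = (\<zeta>' \<in> stays_large v N)"
    by (simp add: stays_large_def)
qed

definition spine_event :: "nat \<Rightarrow> nat \<Rightarrow> (nat list \<Rightarrow> pp) set" where
  "spine_event N k = {\<zeta>. enat 1 < fst (\<zeta> (spine k))} \<inter> stays_large (branch k) N"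

lemma sets_spine_event [measurable]: "spine_event N k \<in> sets config_space"
proof -
  have "{\<zeta> \<in> space config_space. enat 1 < fst (\<zeta> (spine k))} \<in> sets config_space"
    unfolding pp_space_def by measurable
  then show ?thesis
    unfolding spine_event_def by (intro sets.Int) auto
qed

lemma spine_event_depends_only_on: "depends_only_on (spine_block k) (\<lambda>\<zeta>. \<zeta> \<in> spine_event N k)"
  using stays_large_depends_only_on[of "branch k" N]
  unfolding depends_only_on_def spine_event_def spine_block_def by auto

lemma prob_spine_event:
  "prob (config -` spine_event N k \<inter> space M)
     = measure LL {z. enat 1 < fst z} * prob (config -` stays_large (branch k) N \<inter> space M)"
proof -
  define S where "S = {z :: pp. enat 1 < fst z}"
  have "{z \<in> space pp_space. enat 1 < fst z} \<in> sets pp_space"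
    unfolding pp_space_def by measurable
  then have S: "S \<in> sets pp_space"
    by (simp add: S_def)
  have "(indicator (spine_event N k) :: _ \<Rightarrow> real)
      = (\<lambda>\<zeta>. indicator S (\<zeta> (spine k)) * indicator (stays_large (branch k) N) \<zeta>)"
    by (auto simp: fun_eq_iff spine_event_def S_def indicator_def)
  then have "prob (config -` spine_event N k \<inter> space M)
      = Ec (\<lambda>\<zeta>. indicator S (\<zeta> (spine k)) * indicator (stays_large (branch k) N) \<zeta>)"
    by (simp flip: Ec_indicator)
  also have "\<dots> = Ec (\<lambda>\<zeta>. indicator S (\<zeta> (spine k))) * Ec (indicator (stays_large (branch k) N))"
  proof (rule Ec_mult_indep[where A="{spine k}" and B="subtree (branch k)"])
    show "depends_only_on (subtree (branch k)) (indicator (stays_large (branch k) N) :: _ \<Rightarrow> real)"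
      using stays_large_depends_only_on[of "branch k" N]
      unfolding depends_only_on_def indicator_def by simp blast
    show "bounded_rv (\<lambda>\<zeta>. indicator S (\<zeta> (spine k)) :: real)"
      using S by (intro bounded_rv_at_vertex[where c=1]) auto
  qed (auto simp: spine_not_mem_subtree_branch bounded_rv_indicator depends_only_on_vertex)
  finally show ?thesis
    using S by (simp add: Ec_indicator Ec_indicator_vertex S_def)
qed

lemma indep_events_not_spine_event:
  "indep_events (\<lambda>k. {\<omega> \<in> space M. config \<omega> \<notin> spine_event N k}) UNIV"
proof -
  let ?B = "\<lambda>k. \<Pi>\<^sub>M u\<in>spine_block k. pp_space"
  have "indep_vars ?B (\<lambda>k \<omega>. restrict (config \<omega>) (spine_block k)) UNIV"
    unfolding config_def by (rule indep_vars_restrict[OF indep_Z]) (auto simp: disjoint_family_spine_block)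
  then have "indep_events
      (\<lambda>k. {\<omega> \<in> space M. extend_config (spine_block k) (restrict (config \<omega>) (spine_block k)) \<notin> spine_event N k}) UNIV"
    by (rule indep_eventsI_indep_vars) measurable
  moreover have "extend_config (spine_block k) (restrict \<zeta> (spine_block k)) \<in> spine_event N k
      \<longleftrightarrow> \<zeta> \<in> spine_event N k" for k \<zeta>
    by (rule depends_only_on_extend_config[OF spine_event_depends_only_on])
  ultimately show ?thesis
    by simp
qed

context
  assumes mu_gt_1: "1 < mu"
begin

lemma rho_gt_1: "1 < rho"
  using mu_gt_1 by (simp add: rho_def)

lemma rho_pow_4: "rho ^ 4 = mu"
  using mu_gt_1 by (simp add: rho_def)

lemma rho_less_mu: "rho < mu"
  using rho_gt_1 rho_pow_4 power_strict_increasing[of 1 4 rho] by simp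

lemma prob_large_defect_le:
  "prob {\<omega> \<in> space M. rho ^ (3 * n) \<le> \<bar>trunc_defect K a mu (config \<omega>) v n\<bar>} \<le> (real K)\<^sup>2 * (1 / rho) ^ n"
proof -
  have "prob {\<omega> \<in> space M. rho ^ (3 * n) \<le> \<bar>trunc_defect K a mu (config \<omega>) v n\<bar>}
      \<le> Ec (\<lambda>\<zeta>. (trunc_defect K a mu \<zeta> v n)\<^sup>2) / (rho ^ (3 * n))\<^sup>2"
    unfolding Ec_def
    using rho_gt_1 integrable_config[OF bounded_rv_mult[OF bounded_rv_trunc_defect bounded_rv_trunc_defect]]
    by (intro second_moment_method) (auto simp: power2_eq_square)
  also have "\<dots> \<le> (real K)\<^sup>2 * mu ^ n / (rho ^ (3 * n))\<^sup>2"
    by (intro divide_right_mono Ec_trunc_defect_sq) simp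
  also have "\<dots> = (real K)\<^sup>2 * (1 / rho) ^ (2 * n)"
  proof -
    have "(rho ^ (3 * n))\<^sup>2 = mu ^ n * rho ^ (2 * n)"
      by (simp add: rho_pow_4[symmetric] flip: power_mult power_add)
    then show ?thesis
      using mu_gt_1 by (simp add: power_one_over)
  qed
  also have "\<dots> \<le> (real K)\<^sup>2 * (1 / rho) ^ n"
    using rho_gt_1 by (intro mult_left_mono power_decreasing) auto
  finally show ?thesis .
qed

lemma trunc_gen_ge_of_stays_large:
  assumes large: "\<zeta> \<in> stays_large v N" and tail: "(1 / rho) ^ N / (1 - 1 / rho) \<le> 1 / 4"
    and "N \<le> n"
  shows "mu ^ n / 4 \<le> trunc_gen K a \<zeta> v n"
proof -
  obtain k where n: "n = N + k"
    using \<open>N \<le> n\<close> le_Suc_ex by blast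
  have defect: "\<bar>trunc_defect K a mu \<zeta> v j\<bar> / mu ^ Suc j \<le> (1 / rho) ^ j" if "N \<le> j" for j
  proof -
    have "\<bar>trunc_defect K a mu \<zeta> v j\<bar> / mu ^ Suc j \<le> rho ^ (3 * j) / mu ^ j"
      using large that mu_gt_1
      by (intro frac_le) (auto simp: stays_large_def intro: less_imp_le power_increasing)
    also have "\<dots> = (1 / rho) ^ j"
    proof -
      have "mu ^ j = rho ^ (3 * j) * rho ^ j"
        by (simp add: rho_pow_4[symmetric] flip: power_mult power_add)
      then show ?thesis
        using rho_gt_1 by (simp add: power_one_over)
    qed
    finally show ?thesis .
  qed
  have "1 / 2 - (1 / rho) ^ N / (1 - 1 / rho) \<le> mu ^ N / 2 / mu ^ N - (\<Sum>j<k. (1 / rho) ^ (N + j))"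
    using large geometric_tail_sum_le[of "1 / rho" N k] rho_gt_1 mu_gt_1
    by (simp add: stays_large_def)
  also have "\<dots> \<le> trunc_gen K a \<zeta> v N / mu ^ N -
                   (\<Sum>j<k. \<bar>trunc_defect K a mu \<zeta> v (N + j)\<bar> / mu ^ Suc (N + j))"
    using large mu_gt_1 defect
    by (intro diff_mono divide_right_mono sum_mono) (auto simp: stays_large_def)
  also have "\<dots> \<le> trunc_gen K a \<zeta> v n / mu ^ n"
    unfolding n using mu_gt_1
    by (intro normalized_recursion_lower_bound[where d="trunc_defect K a mu \<zeta> v"])
      (auto simp: trunc_defect_def)
  finally have "1 / 4 \<le> trunc_gen K a \<zeta> v n / mu ^ n"
    using tail by linarith
  then show ?thesis
    using mu_gt_1 by (simp add: le_divide_eq)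
qed

lemma prob_large_start_ge:
  "1 / (4 * m2_const) \<le> prob {\<omega> \<in> space M. mu ^ N / 2 \<le> trunc_gen K a (config \<omega>) v N}"
proof -
  have "expectation (\<lambda>\<omega>. (trunc_gen K a (config \<omega>) v N)\<^sup>2) \<le> m2_const * (mu ^ N)\<^sup>2"
    using Ec_trunc_gen_sq[OF mu_gt_1, of v N] by (simp add: Ec_def mult.commute flip: power_mult)
  then show ?thesis
    using abs_trunc_gen_le m2_const_ge_1[OF mu_gt_1] mu_gt_1 Ec_trunc_gen[of v N]
    by (intro paley_zygmund_half) (auto simp: Ec_def)
qed

lemma prob_some_large_defect_le:
  "prob (\<Union>k. {\<omega> \<in> space M. rho ^ (3 * (N + k)) \<le> \<bar>trunc_defect K a mu (config \<omega>) v (N + k)\<bar>})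
     \<le> (real K)\<^sup>2 * ((1 / rho) ^ N / (1 - 1 / rho))"
proof -
  define B where "B k = {\<omega> \<in> space M. rho ^ (3 * (N + k)) \<le> \<bar>trunc_defect K a mu (config \<omega>) v (N + k)\<bar>}"
    for k
  have [measurable]: "B k \<in> events" for k
    unfolding B_def by measurable
  have "norm (1 / rho) < 1"
    using rho_gt_1 by simp
  then have geometric:
    "(\<lambda>k. (real K)\<^sup>2 * (1 / rho) ^ (N + k)) sums ((real K)\<^sup>2 * ((1 / rho) ^ N / (1 - 1 / rho)))"
    using sums_mult[OF geometric_sums, of "1 / rho" "(real K)\<^sup>2 * (1 / rho) ^ N"]
    by (simp add: power_add divide_inverse mult.assoc)
  have B_le: "prob (B k) \<le> (real K)\<^sup>2 * (1 / rho) ^ (N + k)" for k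
    unfolding B_def by (rule prob_large_defect_le)
  then have summable: "summable (\<lambda>k. prob (B k))"
    by (intro summable_comparison_test[OF _ sums_summable[OF geometric]]) auto
  then have "prob (\<Union>k. B k) \<le> (\<Sum>k. prob (B k))"
    by (intro finite_measure_subadditive_countably) auto
  also have "\<dots> \<le> (real K)\<^sup>2 * ((1 / rho) ^ N / (1 - 1 / rho))"
    using suminf_le[OF B_le summable sums_summable[OF geometric]] sums_unique[OF geometric] by simp
  finally show ?thesis
    by (simp add: B_def)
qed

lemma prob_stays_large_ge:
  assumes tail: "(real K)\<^sup>2 * ((1 / rho) ^ N / (1 - 1 / rho)) \<le> 1 / (8 * m2_const)"
  shows "1 / (8 * m2_const) \<le> prob (config -` stays_large v N \<inter> space M)"
proof -
  define A where "A = {\<omega> \<in> space M. mu ^ N / 2 \<le> trunc_gen K a (config \<omega>) v N}"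
  define B where "B = (\<Union>k. {\<omega> \<in> space M. rho ^ (3 * (N + k)) \<le> \<bar>trunc_defect K a mu (config \<omega>) v (N + k)\<bar>})"
  have [measurable]: "A \<in> events" "B \<in> events"
    unfolding A_def B_def by measurable
  have all_ge: "(\<forall>n\<ge>N. P n) \<longleftrightarrow> (\<forall>k. P (N + k))" for P
    by (metis le_add1 le_Suc_ex)
  have eq: "config -` stays_large v N \<inter> space M = A - B"
    unfolding stays_large_def A_def B_def all_ge by (auto simp: not_le) (meson leD)
  have "prob A \<le> prob (A - B) + prob B"
    using measure_Un_le[of "A - B" M B] finite_measure_mono[of A "(A - B) \<union> B"] by auto
  moreover have "1 / (4 * m2_const) - 1 / (8 * m2_const) = 1 / (8 * m2_const)"
    by simp
  ultimately show ?thesis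
    unfolding eq using prob_large_start_ge[of N v, folded A_def] prob_some_large_defect_le[of N v, folded B_def] tail
    by linarith
qed

lemma AE_ex_spine_event:
  assumes many: "0 < measure LL {z. enat 1 < fst z}"
    and tail: "(real K)\<^sup>2 * ((1 / rho) ^ N / (1 - 1 / rho)) \<le> 1 / (8 * m2_const)"
  shows "AE \<omega> in M. \<exists>k. config \<omega> \<in> spine_event N k"
proof -
  define c where "c = measure LL {z. enat 1 < fst z} / (8 * m2_const)"
  have "0 < c"
    using many m2_const_ge_1[OF mu_gt_1] by (simp add: c_def)
  have "c \<le> prob (config -` spine_event N k \<inter> space M)" for k
    unfolding prob_spine_event c_def
    using mult_left_mono[OF prob_stays_large_ge[OF tail] measure_nonneg] by simp
  moreover have "{\<omega> \<in> space M. config \<omega> \<notin> spine_event N k} = space M - (config -` spine_event N k \<inter> space M)"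
    for k by auto
  ultimately have "prob {\<omega> \<in> space M. config \<omega> \<notin> spine_event N k} \<le> 1 - c" for k
    by (simp add: prob_compl)
  then have "prob (\<Inter>k. {\<omega> \<in> space M. config \<omega> \<notin> spine_event N k}) = 0"
    by (rule prob_INT_indep_events_eq_0[OF indep_events_not_spine_event]) (use \<open>0 < c\<close> in simp)
  then show ?thesis
    by (intro AE_I[where N="\<Inter>k. {\<omega> \<in> space M. config \<omega> \<notin> spine_event N k}"])
      (auto simp: emeasure_eq_measure)
qed

lemma ex_tail_threshold:
  "\<exists>N. (1 / rho) ^ N / (1 - 1 / rho) \<le> 1 / 4 \<and>
       (real K)\<^sup>2 * ((1 / rho) ^ N / (1 - 1 / rho)) \<le> 1 / (8 * m2_const)"
proof -
  have tail_0: "(\<lambda>N. (1 / rho) ^ N / (1 - 1 / rho)) \<longlonglongrightarrow> 0"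
    using rho_gt_1 by (intro tendsto_divide_zero LIMSEQ_power_zero) auto
  have "eventually (\<lambda>N. (1 / rho) ^ N / (1 - 1 / rho) < 1 / 4) sequentially"
    using tail_0 by (rule order_tendstoD(2)) simp
  moreover have "eventually (\<lambda>N. (real K)\<^sup>2 * ((1 / rho) ^ N / (1 - 1 / rho)) < 1 / (8 * m2_const)) sequentially"
    using tendsto_mult_right_zero[OF tail_0] by (rule order_tendstoD(2)) (use m2_const_ge_1[OF mu_gt_1] in simp)
  ultimately have "eventually (\<lambda>N. (1 / rho) ^ N / (1 - 1 / rho) \<le> 1 / 4 \<and>
      (real K)\<^sup>2 * ((1 / rho) ^ N / (1 - 1 / rho)) \<le> 1 / (8 * m2_const)) sequentially"
    by eventually_elim simp
  then show ?thesis
    using eventually_happens' sequentially_bot by blast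
qed

lemma AE_eventually_card_good_set_ge:
  assumes "0 < a" and many: "0 < measure LL {z. enat 1 < fst z}"
    and children: "AE \<omega> in M. \<forall>u. fst (Z u \<omega>) \<noteq> 0"
  shows "AE \<omega> in M. eventually (\<lambda>n. let S = good_set (\<lambda>u. fst (Z u \<omega>)) (\<lambda>u. snd (Z u \<omega>)) (2 * a) n
           in infinite S \<or> rho ^ n \<le> real (card S)) sequentially"
proof -
  obtain N where tail: "(1 / rho) ^ N / (1 - 1 / rho) \<le> 1 / 4"
    "(real K)\<^sup>2 * ((1 / rho) ^ N / (1 - 1 / rho)) \<le> 1 / (8 * m2_const)"
    using ex_tail_threshold by blast
  have "AE \<omega> in M. \<exists>k. config \<omega> \<in> spine_event N k"
    by (rule AE_ex_spine_event[OF many tail(2)])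
  then show ?thesis
    using children
  proof eventually_elim
    case (elim \<omega>)
    then obtain k where k: "config \<omega> \<in> spine_event N k"
      by blast
    have "in_tree (\<lambda>u. fst (config \<omega> u)) (branch k)"
      using elim(2) k by (intro in_tree_branch) (auto simp: spine_event_def config_def one_enat_def)
    moreover have "eventually (\<lambda>n. 1 / 4 * mu ^ n \<le> trunc_gen K a (config \<omega>) (branch k) n) sequentially"
      using k trunc_gen_ge_of_stays_large[OF _ tail(1)]
      by (intro eventually_sequentiallyI[of N]) (auto simp: spine_event_def)
    ultimately have "eventually (\<lambda>n. let S = good_set (\<lambda>u. fst (config \<omega> u)) (\<lambda>u. snd (config \<omega> u)) (2 * a) n
        in infinite S \<or> rho ^ n \<le> real (card S)) sequentially"
      by (rule eventually_card_good_set_ge[where c="1 / 4", OF \<open>0 < a\<close>])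
        (use rho_gt_1 rho_less_mu in auto)
    then show ?case
      by (simp add: config_def)
  qed
qed

end

end

theorem lemma2p8:
  fixes M :: "'w measure" and LL :: "pp measure" and Z :: "nat list \<Rightarrow> 'w \<Rightarrow> pp"
  assumes "prob_space M"
    and "prob_space.indep_vars M (\<lambda>_. pp_space) Z UNIV"
    and "\<And>u. distr M pp_space (Z u) = LL"
    and A1a: "emeasure LL {z \<in> space LL. fst z = 0} = 0"
    and A1b: "(\<integral>\<^sup>+ z. ennreal_of_enat (fst z) \<partial>LL) > 1"
    and A3: "(\<integral>\<^sup>+ z. A3_integrand z \<partial>LL) < \<infinity>"
  shows "\<exists>a>0. \<exists>\<rho>>1. AE \<omega> in M. eventually (\<lambda>n.
           let S = good_set (\<lambda>u. fst (Z u \<omega>)) (\<lambda>u. snd (Z u \<omega>)) a n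
           in infinite S \<or> \<rho> ^ n \<le> real (card S)) sequentially"
proof -
  interpret iid_tree M Z LL
    using assms(1-3) by (simp add: iid_tree_def iid_tree_axioms_def)
  obtain K a where "0 < a" and supercritical: "1 < (\<integral>z. (\<Sum>i<K. of_bool (kept a z i) :: real) \<partial>LL)"
    using exists_supercritical_truncation[OF A1b] by blast
  interpret truncated_gw M Z LL K a ..
  have "1 < mu"
    using supercritical by (simp add: mu_eq_integral)
  then have "AE \<omega> in M. eventually (\<lambda>n. let S = good_set (\<lambda>u. fst (Z u \<omega>)) (\<lambda>u. snd (Z u \<omega>)) (2 * a) n
      in infinite S \<or> rho ^ n \<le> real (card S)) sequentially"
    using \<open>0 < a\<close> prob_many_children_pos[OF A1b] AE_every_vertex_has_child[OF A1a]
    by (rule AE_eventually_card_good_set_ge)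
  then show ?thesis
    using \<open>0 < a\<close> rho_gt_1[OF \<open>1 < mu\<close>] by (intro exI[of _ "2 * a"] exI[of _ rho]) auto
qed

end
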